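(* Let $q$ be a prime, let $d=\pi(q-1)$ be the number of primes less than $q$, and let $p_1<p_2<\dots<p_d$ be these primes. For $n\in\{1,2,\dots,q-1\}$ write $n=\prod_{i=1}^d p_i^{\mu_i(n)}$ and define the linear form $\mathscr{L}_n:\mathbb{F}_q^d\to\mathbb{F}_q$ by $\mathscr{L}_n(\mathbf{v})=\sum_{i=1}^d \mu_i(n)v_i$ for $\mathbf{v}=(v_1,\dots,v_d)$. For a fixed $x_0\in\mathbb{F}_q^\times$ let $$N_q(x_0)=\#\{\mathbf{v}\in\mathbb{F}_q^d:\ \mathscr{L}_n(\mathbf{v})\neq x_0 \text{ for all } n\in\{1,2,\dots,q-1\}\},$$ and put $c(q)=N_q(x_0)/q^d$. Then, as $q\to\infty$, $$c(q)=\frac{1}{e}+O\!\left(\frac{1}{\log_2 q}\right).$$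
   Context: $\log x:=\max\{\ln x,2\}$ and $\log_k x:=\log(\log_{k-1}x)$ for $k\ge 2$. $\pi(x)$ is the number of primes $\le x$. *)

theory Defs
  imports "HOL-Computational_Algebra.Primes" "HOL-Library.FuncSet" Complex_Main
begin

text \<open>The paper's truncated logarithm: log x = max(ln x, 2), and log_2 x = log(log x).\<close>
definition plog :: "real \<Rightarrow> real" where
  "plog x = max (ln x) 2"

definition plog2 :: "real \<Rightarrow> real" where
  "plog2 x = plog (plog x)"

text \<open>Primes less than q; they index the coordinates of F_q^d, d = pi(q-1).\<close>
definition primes_below :: "nat \<Rightarrow> nat set" where
  "primes_below q = {p. prime p \<and> p < q}"

text \<open>Linear form L_n(v) = sum_i mu_i(n) v_i in F_q, with F_q represented by {0..<q}
  (arithmetic mod q) and v indexed by the primes p_i < q.\<close>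
definition Lform :: "nat \<Rightarrow> nat \<Rightarrow> (nat \<Rightarrow> nat) \<Rightarrow> nat" where
  "Lform q n v = (\<Sum>p\<in>primes_below q. multiplicity p n * v p) mod q"

definition Nq :: "nat \<Rightarrow> nat \<Rightarrow> nat" where
  "Nq q x0 = card {v \<in> primes_below q \<rightarrow>\<^sub>E {0..<q}. \<forall>n\<in>{1..q-1}. Lform q n v \<noteq> x0}"

definition cq :: "nat \<Rightarrow> nat \<Rightarrow> real" where
  "cq q x0 = real (Nq q x0) / real q ^ card (primes_below q)"

end

theory Submission
  imports Defs "HOL-Real_Asymp.Real_Asymp"
begin

text \<open>
  Reveal the coordinates \<open>v_p\<close> one prime at a time and let \<open>w_k\<close> be the proportion of \<open>v\<close> with
  \<open>L_n(v) \<noteq> x0\<close> for all \<open>n < q\<close> whose prime factors are all below \<open>k\<close>; thus \<open>w_2 = 1\<close> and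
  \<open>w_q = c(q)\<close>. Passing a prime \<open>k\<close> adds the constraints for the \<open>n\<close> with largest prime factor \<open>k\<close>.
  As \<open>0 < \<mu>_k(n) < q\<close>, each of them excludes exactly one value of \<open>v_k\<close>, whatever the other
  coordinates are, and two of them exclude the same value only for a proportion \<open>\<le> 1/q\<close> of all \<open>v\<close>:
  eliminating \<open>v_k\<close> leaves a linear congruence which is nontrivial unless the two \<open>n\<close> coincide.
  With \<open>a_k\<close> the proportion of \<open>n < q\<close> with largest prime factor \<open>k\<close> this gives
  \<open>(1 - a_k) w_k \<le> w_{k+1} \<le> (1 - a_k) w_k + a_k\<^sup>2\<close>, so \<open>c(q) = \<Prod>(1 - a_k) + O(\<Sum> a_k\<^sup>2)\<close>.
  Finally \<open>\<Sum> a_k = 1 - 2/q\<close> and each \<open>a_k\<close> is \<open>O(1 / log_2 q)\<close>: for \<open>k \<ge> log_2 q\<close> because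
  \<open>a_k \<le> 1/k\<close>, and for smaller \<open>k\<close> because at most \<open>(1 + log q / log 2)^{log_2 q + 1} = q^{o(1)}\<close>
  numbers below \<open>q\<close> have all their prime factors below \<open>k\<close>.
\<close>

section \<open>Prime factorisations and linear congruences\<close>

lemma prime_dvd_mult_small_eq_0:
  fixes q a c :: int
  assumes "prime q" "q dvd a * c" "\<not> q dvd a" "\<bar>c\<bar> < q"
  shows "c = 0"
proof (rule ccontr)
  assume "c \<noteq> 0"
  moreover have "q dvd c" using assms(1-3) prime_dvd_mult_iff by blast
  ultimately have "\<bar>q\<bar> \<le> \<bar>c\<bar>" by (rule dvd_imp_le_int)
  thus False using assms(4) by linarith
qed

lemma linear_congruence_solution_unique:
  fixes q e t1 t2 b :: nat
  assumes q: "prime q" and e: "0 < e" "e < q" and t: "t1 < q" "t2 < q"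
    and eq: "(e * t1 + b) mod q = (e * t2 + b) mod q"
  shows "t1 = t2"
proof -
  have "int (e * t1 + b) mod int q = int (e * t2 + b) mod int q"
    using eq by (metis of_nat_mod)
  hence "int q dvd int (e * t1 + b) - int (e * t2 + b)" by (simp add: mod_eq_dvd_iff)
  hence "int q dvd int e * (int t1 - int t2)" by (simp add: algebra_simps)
  moreover have "\<not> int q dvd int e" using e by (simp add: nat_dvd_not_less)
  moreover have "\<bar>int t1 - int t2\<bar> < int q" using t by linarith
  moreover have "prime (int q)" using q by simp
  ultimately have "int t1 - int t2 = 0" using prime_dvd_mult_small_eq_0 by blast
  thus ?thesis by simp
qed

lemma linear_congruence_solution_exists:
  fixes q e b x :: nat
  assumes q: "prime q" and e: "0 < e" "e < q" and x: "x < q"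
  shows "\<exists>t<q. (e * t + b) mod q = x"
proof -
  let ?f = "\<lambda>t. (e * t + b) mod q"
  have "inj_on ?f {0..<q}"
  proof (rule inj_onI)
    fix t1 t2 assume "t1 \<in> {0..<q}" "t2 \<in> {0..<q}" "?f t1 = ?f t2"
    thus "t1 = t2" by (intro linear_congruence_solution_unique[OF q e, of t1 t2 b]) auto
  qed
  hence "card (?f ` {0..<q}) = card {0..<q}" by (rule card_image)
  moreover have "?f ` {0..<q} \<subseteq> {0..<q}" using prime_gt_0_nat[OF q] by auto
  ultimately have "?f ` {0..<q} = {0..<q}" using card_subset_eq by blast
  hence "x \<in> ?f ` {0..<q}" using x by simp
  thus ?thesis by auto
qed

lemma two_power_multiplicity_le:
  fixes p n :: nat
  assumes "prime p" "0 < n"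
  shows "2 ^ multiplicity p n \<le> n"
proof -
  have "2 ^ multiplicity p n \<le> p ^ multiplicity p n"
    using assms(1) prime_ge_2_nat power_mono by blast
  also have "\<dots> \<le> n" using assms(2) multiplicity_dvd by (intro dvd_imp_le)
  finally show ?thesis .
qed

lemma multiplicity_less_self:
  fixes p n :: nat
  assumes "prime p" "0 < n"
  shows "multiplicity p n < n"
  using two_power_multiplicity_le[OF assms] less_exp[of "multiplicity p n"] by linarith

lemma multiplicity_le_log:
  fixes p n :: nat
  assumes "prime p" "0 < n"
  shows "real (multiplicity p n) \<le> log 2 n"
proof -
  have "2 powr real (multiplicity p n) \<le> real n"
    using two_power_multiplicity_le[OF assms] by (simp add: powr_realpow flip: of_nat_le_iff)
  thus ?thesis using assms(2) by (simp add: le_log_iff)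
qed

lemma inj_on_smooth_exponents:
  "inj_on (\<lambda>n. restrict (\<lambda>p. multiplicity p n) {p. p < y \<and> prime p})
     {n :: nat. 0 < n \<and> (\<forall>p\<in>prime_factors n. p < y)}"
proof (rule inj_onI)
  fix n n' :: nat
  assume n: "n \<in> {n. 0 < n \<and> (\<forall>p\<in>prime_factors n. p < y)}"
    and n': "n' \<in> {n. 0 < n \<and> (\<forall>p\<in>prime_factors n. p < y)}"
    and eq: "restrict (\<lambda>p. multiplicity p n) {p. p < y \<and> prime p}
           = restrict (\<lambda>p. multiplicity p n') {p. p < y \<and> prime p}"
  show "n = n'"
  proof (rule multiplicity_eq_nat)
    fix p :: nat assume "prime p"
    show "multiplicity p n = multiplicity p n'"
    proof (cases "p < y")
      case True
      thus ?thesis using fun_cong[OF eq, of p] \<open>prime p\<close> by simp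
    next
      case False
      hence "\<not> p dvd n" "\<not> p dvd n'" using n n' \<open>prime p\<close> by (auto simp: in_prime_factors_iff)
      thus ?thesis by (simp add: not_dvd_imp_multiplicity_0)
    qed
  qed (use n n' in auto)
qed

lemma card_smooth_le:
  fixes N y :: nat
  assumes "0 < N"
  shows "real (card {n \<in> {1..N}. \<forall>p\<in>prime_factors n. p < y}) \<le> (log 2 N + 1) ^ y"
proof -
  let ?S = "{n \<in> {1..N}. \<forall>p\<in>prime_factors n. p < y}"
  let ?Y = "{p. p < y \<and> prime p}"
  let ?L = "nat \<lfloor>log 2 N\<rfloor>"
  let ?exponents = "\<lambda>n. restrict (\<lambda>p. multiplicity p n) ?Y"
  have inj: "inj_on ?exponents ?S"
    by (rule inj_on_subset[OF inj_on_smooth_exponents]) auto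
  have finY: "finite ?Y" by (rule finite_subset[of _ "{..<y}"]) auto
  have sub: "?exponents ` ?S \<subseteq> ?Y \<rightarrow>\<^sub>E {0..?L}"
  proof
    fix f assume "f \<in> ?exponents ` ?S"
    then obtain n where n: "1 \<le> n" "n \<le> N" and f: "f = ?exponents n" by auto
    have "multiplicity p n \<le> ?L" if "prime p" for p
    proof -
      have "real (multiplicity p n) \<le> log 2 n" using that n by (intro multiplicity_le_log) auto
      also have "\<dots> \<le> log 2 N" using n by simp
      finally show ?thesis by (simp add: le_nat_floor)
    qed
    thus "f \<in> ?Y \<rightarrow>\<^sub>E {0..?L}" using f by auto
  qed
  have "card ?S = card (?exponents ` ?S)" using inj by (simp add: card_image)
  also have "\<dots> \<le> card (?Y \<rightarrow>\<^sub>E {0..?L})" using sub finY by (intro card_mono finite_PiE) auto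
  also have "\<dots> = (?L + 1) ^ card ?Y" using finY by (simp add: card_PiE)
  also have "\<dots> \<le> (?L + 1) ^ y"
    using card_mono[of "{..<y}" ?Y] by (intro power_increasing) auto
  finally have "real (card ?S) \<le> real ((?L + 1) ^ y)" by (simp only: of_nat_le_iff)
  also have "\<dots> = (real ?L + 1) ^ y" by (simp add: add.commute)
  also have "\<dots> \<le> (log 2 N + 1) ^ y"
  proof (rule power_mono)
    have "0 \<le> log 2 N" using assms by simp
    thus "real ?L + 1 \<le> log 2 N + 1" by linarith
  qed simp
  finally show ?thesis .
qed

section \<open>Counting in finite product spaces\<close>

lemma sum_PiE_split_coordinate:
  fixes G :: "('a \<Rightarrow> 'b) \<Rightarrow> 'c::comm_monoid_add"
  assumes "k \<in> P"
  shows "(\<Sum>v\<in>P \<rightarrow>\<^sub>E T. G v) = (\<Sum>g\<in>(P - {k}) \<rightarrow>\<^sub>E T. \<Sum>t\<in>T. G (g(k := t)))"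
proof -
  let ?upd = "\<lambda>(t, g). g(k := t)"
  have "P \<rightarrow>\<^sub>E T = ?upd ` (T \<times> ((P - {k}) \<rightarrow>\<^sub>E T))"
    using PiE_insert_eq[of k "P - {k}" "\<lambda>_. T"] assms by (simp add: insert_absorb)
  moreover have "inj_on ?upd (T \<times> ((P - {k}) \<rightarrow>\<^sub>E T))"
    using inj_combinator[of k "P - {k}" "\<lambda>_. T"] by simp
  ultimately have "(\<Sum>v\<in>P \<rightarrow>\<^sub>E T. G v) = (\<Sum>(t, g)\<in>T \<times> ((P - {k}) \<rightarrow>\<^sub>E T). G (g(k := t)))"
    by (simp add: sum.reindex split_def)
  also have "\<dots> = (\<Sum>g\<in>(P - {k}) \<rightarrow>\<^sub>E T. \<Sum>t\<in>T. G (g(k := t)))"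
    by (simp add: sum.cartesian_product[symmetric] sum.swap[of _ T])
  finally show ?thesis .
qed

lemma sum_update_coordinate:
  fixes f :: "'a \<Rightarrow> 'b \<Rightarrow> 'c::comm_monoid_add"
  assumes "finite P" "p \<in> P"
  shows "(\<Sum>r\<in>P. f r ((v(p := t)) r)) = f p t + (\<Sum>r\<in>P - {p}. f r (v r))"
  using assms by (simp add: sum.remove)

lemma card_PiE_coordinate_in_fibre:
  assumes k: "k \<in> P" and fin: "finite P" "finite T"
    and invariant: "\<And>v t. S (v(k := t)) = S v" and sub: "\<And>v. S v \<subseteq> T"
  shows "card {v \<in> P \<rightarrow>\<^sub>E T. v k \<in> S v} * card T = (\<Sum>v\<in>P \<rightarrow>\<^sub>E T. card (S v))"
proof -
  have fibre: "(\<Sum>t\<in>T. if t \<in> S g then 1 else 0) = card (S g)" for g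
  proof -
    have "{t \<in> T. t \<in> S g} = S g" using sub[of g] by blast
    thus ?thesis using fin by (simp add: sum.inter_filter[symmetric] flip: card_eq_sum)
  qed
  have "card {v \<in> P \<rightarrow>\<^sub>E T. v k \<in> S v} = (\<Sum>v\<in>P \<rightarrow>\<^sub>E T. if v k \<in> S v then 1 else 0)"
    using fin by (subst sum.inter_filter[symmetric]) (auto intro: finite_PiE)
  also have "\<dots> = (\<Sum>g\<in>(P - {k}) \<rightarrow>\<^sub>E T. \<Sum>t\<in>T. if t \<in> S g then 1 else 0)"
    unfolding sum_PiE_split_coordinate[OF k] by (simp add: invariant)
  finally have lhs: "card {v \<in> P \<rightarrow>\<^sub>E T. v k \<in> S v} = (\<Sum>g\<in>(P - {k}) \<rightarrow>\<^sub>E T. card (S g))"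
    by (simp only: fibre)
  have "(\<Sum>v\<in>P \<rightarrow>\<^sub>E T. card (S v)) = (\<Sum>g\<in>(P - {k}) \<rightarrow>\<^sub>E T. \<Sum>t\<in>T. card (S g))"
    unfolding sum_PiE_split_coordinate[OF k] by (simp only: invariant)
  thus ?thesis by (simp add: lhs sum_distrib_left mult.commute)
qed

lemma card_linear_congruence_le:
  fixes q :: nat and c :: "'a \<Rightarrow> int"
  assumes q: "prime q" and P: "finite P" "p \<in> P" and c: "\<not> int q dvd c p"
  shows "card {v \<in> P \<rightarrow>\<^sub>E {0..<q}. int q dvd (\<Sum>r\<in>P. c r * int (v r)) + d} * q
           \<le> card (P \<rightarrow>\<^sub>E {0..<q})"
proof -
  define R where "R v \<longleftrightarrow> int q dvd (\<Sum>r\<in>P. c r * int (v r)) + d" for v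
  define S where "S v = {t \<in> {0..<q}. R (v(p := t))}" for v
  have "card (S v) \<le> 1" for v
  proof -
    have upd: "(\<Sum>r\<in>P. c r * int ((v(p := t)) r)) = c p * int t + (\<Sum>r\<in>P - {p}. c r * int (v r))"
      for t using sum_update_coordinate[OF P, of "\<lambda>r x. c r * int x"] by simp
    have "t1 = t2" if "t1 \<in> S v" "t2 \<in> S v" for t1 t2
    proof -
      have t: "t1 < q" "t2 < q"
        and dv: "int q dvd c p * int t1 + (\<Sum>r\<in>P - {p}. c r * int (v r)) + d"
            "int q dvd c p * int t2 + (\<Sum>r\<in>P - {p}. c r * int (v r)) + d"
        using that unfolding S_def R_def upd by auto
      have "int q dvd (c p * int t1 + (\<Sum>r\<in>P - {p}. c r * int (v r)) + d)
                       - (c p * int t2 + (\<Sum>r\<in>P - {p}. c r * int (v r)) + d)"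
        using dv by (rule dvd_diff)
      hence "int q dvd c p * (int t1 - int t2)" by (simp add: right_diff_distrib)
      moreover have "\<bar>int t1 - int t2\<bar> < int q" using t by linarith
      moreover have "prime (int q)" using q by simp
      ultimately have "int t1 - int t2 = 0" using prime_dvd_mult_small_eq_0 c by blast
      thus "t1 = t2" by simp
    qed
    thus ?thesis using card_le_Suc0_iff_eq[of "S v"] by (simp add: S_def)
  qed
  hence "(\<Sum>v\<in>P \<rightarrow>\<^sub>E {0..<q}. card (S v)) \<le> card (P \<rightarrow>\<^sub>E {0..<q})"
    using sum_mono[of "P \<rightarrow>\<^sub>E {0..<q}" "\<lambda>v. card (S v)" "\<lambda>_. 1"] by simp
  moreover have "card {v \<in> P \<rightarrow>\<^sub>E {0..<q}. v p \<in> S v} * card {0..<q}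
                 = (\<Sum>v\<in>P \<rightarrow>\<^sub>E {0..<q}. card (S v))"
    by (rule card_PiE_coordinate_in_fibre[OF P(2,1)]) (auto simp: S_def)
  moreover have "{v \<in> P \<rightarrow>\<^sub>E {0..<q}. v p \<in> S v} = {v \<in> P \<rightarrow>\<^sub>E {0..<q}. R v}"
    using P(2) by (auto simp: S_def PiE_iff)
  ultimately show ?thesis unfolding R_def by simp
qed

lemma card_le_card_image_plus_collisions:
  assumes "finite A"
  shows "card A \<le> card (f ` A) + card {(a, b) \<in> A \<times> A. a \<noteq> b \<and> f a = f b}"
proof -
  let ?D = "{a \<in> A. \<exists>b\<in>A. b \<noteq> a \<and> f a = f b}"
  let ?X = "{(a, b) \<in> A \<times> A. a \<noteq> b \<and> f a = f b}"
  have "inj_on f (A - ?D)" by (auto simp: inj_on_def)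
  hence "card (A - ?D) = card (f ` (A - ?D))" by (simp add: card_image)
  also have "\<dots> \<le> card (f ` A)" using assms by (intro card_mono) auto
  finally have image: "card (A - ?D) \<le> card (f ` A)" .
  have "finite ?X" using assms by (auto intro: finite_subset[of _ "A \<times> A"])
  moreover have "?D \<subseteq> fst ` ?X"
  proof
    fix a assume "a \<in> ?D"
    then obtain b where "(a, b) \<in> ?X" by auto
    thus "a \<in> fst ` ?X" by force
  qed
  ultimately have "card ?D \<le> card ?X" by (intro surj_card_le[where f = fst])
  moreover have "card A \<le> card (A - ?D) + card ?D"
    using card_Un_le[of "A - ?D" ?D] by (simp add: Un_absorb2)
  ultimately show ?thesis using image by linarith
qed

section \<open>Products \<open>\<Prod>(1 - a_j)\<close> versus \<open>exp (-\<Sum> a_j)\<close>\<close>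

lemma prod_one_minus_le_exp_neg_sum:
  fixes a :: "'a \<Rightarrow> real"
  assumes "finite J" "\<And>j. j \<in> J \<Longrightarrow> 0 \<le> a j \<and> a j \<le> 1"
  shows "(\<Prod>j\<in>J. 1 - a j) \<le> exp (- (\<Sum>j\<in>J. a j))"
proof -
  have "(\<Prod>j\<in>J. 1 - a j) \<le> (\<Prod>j\<in>J. exp (- a j))"
  proof (rule prod_mono)
    fix j assume "j \<in> J"
    thus "0 \<le> 1 - a j \<and> 1 - a j \<le> exp (- a j)"
      using assms(2)[of j] exp_ge_add_one_self[of "- a j"] by auto
  qed
  also have "\<dots> = exp (- (\<Sum>j\<in>J. a j))"
    using exp_sum[OF assms(1), of "\<lambda>j. - a j"] by (simp add: sum_negf)
  finally show ?thesis .
qed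

lemma exp_neg_sum_le_prod_one_minus:
  fixes a :: "'a \<Rightarrow> real"
  assumes "finite J" "\<And>j. j \<in> J \<Longrightarrow> 0 \<le> a j \<and> a j \<le> 1/2"
  shows "exp (- (\<Sum>j\<in>J. a j) - 2 * (\<Sum>j\<in>J. a j ^ 2)) \<le> (\<Prod>j\<in>J. 1 - a j)"
proof -
  have "exp (- (\<Sum>j\<in>J. a j) - 2 * (\<Sum>j\<in>J. a j ^ 2)) = exp (\<Sum>j\<in>J. - a j - 2 * a j ^ 2)"
    by (simp add: sum_subtractf sum_negf sum_distrib_left)
  also have "\<dots> = (\<Prod>j\<in>J. exp (- a j - 2 * a j ^ 2))" by (rule exp_sum[OF assms(1)])
  also have "\<dots> \<le> (\<Prod>j\<in>J. 1 - a j)"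
  proof (rule prod_mono)
    fix j assume "j \<in> J"
    hence "0 \<le> a j" "a j \<le> 1/2" using assms(2) by auto
    hence "- a j - 2 * a j ^ 2 \<le> ln (1 - a j)" by (rule ln_one_minus_pos_lower_bound)
    hence "exp (- a j - 2 * a j ^ 2) \<le> exp (ln (1 - a j))" by (simp only: exp_le_cancel_iff)
    also have "\<dots> = 1 - a j" using \<open>a j \<le> 1/2\<close> by simp
    finally show "0 \<le> exp (- a j - 2 * a j ^ 2) \<and> exp (- a j - 2 * a j ^ 2) \<le> 1 - a j"
      by simp
  qed
  finally show ?thesis .
qed

lemma prod_one_minus_near_exp_neg_1:
  fixes a :: "'a \<Rightarrow> real"
  assumes J: "finite J" and a: "\<And>j. j \<in> J \<Longrightarrow> 0 \<le> a j \<and> a j \<le> 1/2 \<and> a j \<le> m"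
    and m: "0 \<le> m" and sum: "(\<Sum>j\<in>J. a j) = 1 - \<delta>" and \<delta>: "0 \<le> \<delta>" "\<delta> \<le> 1/2"
  shows "exp (-1) - 2 * m \<le> (\<Prod>j\<in>J. 1 - a j)"
    and "(\<Prod>j\<in>J. 1 - a j) + (\<Sum>j\<in>J. a j ^ 2) \<le> exp (-1) + 2 * \<delta> + m"
proof -
  let ?t = "\<Sum>j\<in>J. a j ^ 2"
  have "?t \<le> (\<Sum>j\<in>J. m * a j)"
  proof (rule sum_mono)
    fix j assume "j \<in> J"
    thus "a j ^ 2 \<le> m * a j" using a[of j] by (simp add: power2_eq_square mult_right_mono)
  qed
  also have "\<dots> = m * (1 - \<delta>)" by (simp add: sum_distrib_left[symmetric] sum)
  also have "\<dots> \<le> m" using m \<delta> by (simp add: mult_left_le)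
  finally have t: "?t \<le> m" .
  have "0 \<le> ?t" by (intro sum_nonneg) auto
  have e1: "exp (-1) \<le> exp (\<delta> - 1)" "exp (\<delta> - 1) \<le> 1" using \<delta> by auto
  have "exp (-1) - 2 * ?t \<le> exp (\<delta> - 1) * (1 - 2 * ?t)"
  proof -
    have "exp (\<delta> - 1) * ?t \<le> ?t" using e1(2) \<open>0 \<le> ?t\<close> by (intro mult_left_le_one_le) auto
    thus ?thesis by (simp add: algebra_simps) (use e1(1) in linarith)
  qed
  also have "\<dots> \<le> exp (\<delta> - 1) * exp (- 2 * ?t)"
    using exp_ge_add_one_self[of "- 2 * ?t"] by (intro mult_left_mono) auto
  also have "\<dots> = exp (- (\<Sum>j\<in>J. a j) - 2 * ?t)" by (simp add: sum exp_add[symmetric])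
  also have "\<dots> \<le> (\<Prod>j\<in>J. 1 - a j)" using a by (intro exp_neg_sum_le_prod_one_minus[OF J]) auto
  finally show "exp (-1) - 2 * m \<le> (\<Prod>j\<in>J. 1 - a j)" using t by linarith
  have "(\<Prod>j\<in>J. 1 - a j) \<le> exp (- (\<Sum>j\<in>J. a j))"
    using a by (intro prod_one_minus_le_exp_neg_sum[OF J]) fastforce
  also have "\<dots> = exp (-1) * exp \<delta>" by (simp add: sum exp_add[symmetric])
  also have "\<dots> \<le> exp (-1) * (1 + 2 * \<delta>)" using exp_bound_lemma[of \<delta>] \<delta> by simp
  also have "\<dots> \<le> exp (-1) + 2 * \<delta>"
    using mult_left_le_one_le[of "2 * \<delta>" "exp (-1)"] \<delta> by (simp add: algebra_simps)
  finally show "(\<Prod>j\<in>J. 1 - a j) + ?t \<le> exp (-1) + 2 * \<delta> + m" using t by linarith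
qed

section \<open>The sieve over \<open>F_q\<^sup>d\<close>\<close>

text \<open>In the locale, \<open>density k\<close> and \<open>weight k\<close> are the \<open>w_k\<close> and
  \<open>a_k\<close> above, and \<open>lpf_class k\<close> is the set of \<open>n < q\<close> with largest prime factor \<open>k\<close>.\<close>

locale residue_sieve =
  fixes q x0 :: nat
  assumes prime_q: "prime q" and x0: "0 < x0" "x0 < q"
begin

abbreviation P :: "nat set" where "P \<equiv> primes_below q"

definition V :: "(nat \<Rightarrow> nat) set" where
  "V = P \<rightarrow>\<^sub>E {0..<q}"

definition avoids_below :: "nat \<Rightarrow> (nat \<Rightarrow> nat) \<Rightarrow> bool" where
  "avoids_below k v \<longleftrightarrow> (\<forall>n\<in>{1..q-1}. (\<forall>p\<in>prime_factors n. p < k) \<longrightarrow> Lform q n v \<noteq> x0)"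

definition lpf_class :: "nat \<Rightarrow> nat set" where
  "lpf_class k = {n \<in> {1..q-1}. k \<in> prime_factors n \<and> (\<forall>p\<in>prime_factors n. p \<le> k)}"

definition blocked :: "nat \<Rightarrow> (nat \<Rightarrow> nat) \<Rightarrow> nat set" where
  "blocked k v = {t \<in> {0..<q}. \<exists>n\<in>lpf_class k. Lform q n (v(k := t)) = x0}"

abbreviation survivors :: "nat \<Rightarrow> nat" where
  "survivors k \<equiv> card {v \<in> V. avoids_below k v}"

lemma q_pos: "0 < q"
  using prime_q prime_gt_0_nat by blast

lemma finite_P: "finite P"
  by (rule finite_subset[of _ "{..<q}"]) (auto simp: primes_below_def)

lemma finite_V: "finite V"
  unfolding V_def using finite_P by (intro finite_PiE) auto

lemma card_V: "card V = q ^ card P"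
  unfolding V_def using finite_P by (simp add: card_PiE)

lemma card_V_pos: "0 < card V"
  using card_V q_pos by simp

lemma lpf_class_subset: "lpf_class k \<subseteq> {1..q-1}"
  unfolding lpf_class_def by auto

lemma finite_lpf_class: "finite (lpf_class k)"
  unfolding lpf_class_def by auto

lemma card_lpf_class_less: "card (lpf_class k) < q"
  using card_mono[OF _ lpf_class_subset, of k] q_pos by simp

lemma multiplicity_lpf_class:
  assumes "n \<in> lpf_class k"
  shows "0 < multiplicity k n" "multiplicity k n < q"
proof -
  have n: "1 \<le> n" "n < q" "k \<in> prime_factors n"
    using assms q_pos unfolding lpf_class_def by auto
  thus "0 < multiplicity k n" by (simp add: prime_factors_multiplicity)
  have "multiplicity k n < n" using n by (intro multiplicity_less_self) auto
  thus "multiplicity k n < q" using n by linarith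
qed

lemma Lform_update:
  assumes "k \<in> P"
  shows "Lform q n (v(k := t)) = (multiplicity k n * t + (\<Sum>p\<in>P - {k}. multiplicity p n * v p)) mod q"
  unfolding Lform_def using sum_update_coordinate[OF finite_P assms, of "\<lambda>p x. multiplicity p n * x"]
  by simp

lemma Lform_update_not_dvd:
  assumes "\<not> k dvd n"
  shows "Lform q n (v(k := t)) = Lform q n v"
  unfolding Lform_def using not_dvd_imp_multiplicity_0[OF assms]
  by (intro arg_cong[where f = "\<lambda>x. x mod q"] sum.cong) auto

lemma avoids_below_update:
  assumes "prime k"
  shows "avoids_below k (v(k := t)) = avoids_below k v"
proof -
  have "\<not> k dvd n" if "n \<in> {1..q-1}" "\<forall>p\<in>prime_factors n. p < k" for n
    using that assms by (auto simp: in_prime_factors_iff)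
  thus ?thesis unfolding avoids_below_def by (auto simp: Lform_update_not_dvd)
qed

lemma avoids_below_Suc:
  assumes k: "k \<in> P" and v: "v \<in> V"
  shows "avoids_below (Suc k) v \<longleftrightarrow> avoids_below k v \<and> v k \<notin> blocked k v"
proof -
  have smooth_Suc: "(\<forall>p\<in>prime_factors n. p < Suc k) \<longleftrightarrow>
      (\<forall>p\<in>prime_factors n. p < k) \<or> n \<in> lpf_class k" if "n \<in> {1..q-1}" for n
    using that unfolding lpf_class_def by (auto simp: less_Suc_eq_le order.order_iff_strict)
  have "avoids_below (Suc k) v \<longleftrightarrow> (\<forall>n\<in>{1..q-1}.
      ((\<forall>p\<in>prime_factors n. p < k) \<or> n \<in> lpf_class k) \<longrightarrow> Lform q n v \<noteq> x0)"
    unfolding avoids_below_def using smooth_Suc by blast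
  also have "\<dots> \<longleftrightarrow> avoids_below k v \<and> (\<forall>n\<in>lpf_class k. Lform q n v \<noteq> x0)"
    using lpf_class_subset[of k] unfolding avoids_below_def by blast
  also have "(\<forall>n\<in>lpf_class k. Lform q n v \<noteq> x0) \<longleftrightarrow> v k \<notin> blocked k v"
    using v k unfolding V_def blocked_def by auto
  finally show ?thesis .
qed

lemma avoids_below_Suc_nonprime:
  assumes "\<not> prime k"
  shows "avoids_below (Suc k) v = avoids_below k v"
proof -
  have "(\<forall>p\<in>prime_factors n. p < Suc k) = (\<forall>p\<in>prime_factors n. p < k)" for n :: nat
    using assms by (auto simp: in_prime_factors_iff less_Suc_eq)
  thus ?thesis unfolding avoids_below_def by simp
qed

lemma survivors_Suc:
  assumes k: "k \<in> P"
  shows "survivors (Suc k) * q = (\<Sum>v\<in>V. if avoids_below k v then q - card (blocked k v) else 0)"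
proof -
  define S where "S v = (if avoids_below k v then {0..<q} - blocked k v else {})" for v
  have "prime k" using k by (simp add: primes_below_def)
  hence "card {v \<in> V. v k \<in> S v} * card {0..<q} = (\<Sum>v\<in>V. card (S v))"
    unfolding V_def using finite_P k
    by (intro card_PiE_coordinate_in_fibre) (auto simp: S_def avoids_below_update blocked_def)
  moreover have "{v \<in> V. v k \<in> S v} = {v \<in> V. avoids_below (Suc k) v}"
    using avoids_below_Suc[OF k] V_def k by (auto simp: S_def PiE_iff)
  moreover have "card (S v) = (if avoids_below k v then q - card (blocked k v) else 0)" for v
  proof -
    have "blocked k v \<subseteq> {0..<q}" unfolding blocked_def by auto
    hence "card ({0..<q} - blocked k v) = q - card (blocked k v)"
      by (simp add: card_Diff_subset finite_subset)
    thus ?thesis by (simp add: S_def)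
  qed
  ultimately show ?thesis by simp
qed

lemma ex1_forced_value:
  assumes k: "k \<in> P" and n: "n \<in> lpf_class k"
  shows "\<exists>!t. t < q \<and> Lform q n (v(k := t)) = x0"
  unfolding Lform_update[OF k]
  using linear_congruence_solution_exists[OF prime_q multiplicity_lpf_class[OF n] x0(2)]
        linear_congruence_solution_unique[OF prime_q multiplicity_lpf_class[OF n]]
  by blast

definition forced_value :: "nat \<Rightarrow> (nat \<Rightarrow> nat) \<Rightarrow> nat \<Rightarrow> nat" where
  "forced_value k v n = (THE t. t < q \<and> Lform q n (v(k := t)) = x0)"

lemma forced_value_solves:
  assumes "k \<in> P" "n \<in> lpf_class k"
  shows "forced_value k v n < q" "Lform q n (v(k := forced_value k v n)) = x0"
  using theI'[OF ex1_forced_value[OF assms, of v]] unfolding forced_value_def by auto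

lemma blocked_eq_image_forced_value:
  assumes k: "k \<in> P"
  shows "blocked k v = forced_value k v ` lpf_class k"
  using forced_value_solves[OF k] ex1_forced_value[OF k] unfolding blocked_def by fastforce

definition common_root :: "nat \<Rightarrow> nat \<Rightarrow> nat \<Rightarrow> (nat \<Rightarrow> nat) \<Rightarrow> bool" where
  "common_root k n n' v \<longleftrightarrow> (\<exists>t<q. Lform q n (v(k := t)) = x0 \<and> Lform q n' (v(k := t)) = x0)"

definition collisions :: "nat \<Rightarrow> (nat \<Rightarrow> nat) \<Rightarrow> nat" where
  "collisions k v = card {(n, n') \<in> lpf_class k \<times> lpf_class k. n \<noteq> n' \<and> common_root k n n' v}"

lemma card_blocked_le:
  assumes "k \<in> P"
  shows "card (blocked k v) \<le> card (lpf_class k)"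
  unfolding blocked_eq_image_forced_value[OF assms] by (rule card_image_le[OF finite_lpf_class])

lemma card_lpf_class_le_blocked_plus_collisions:
  assumes k: "k \<in> P"
  shows "card (lpf_class k) \<le> card (blocked k v) + collisions k v"
proof -
  let ?f = "forced_value k v"
  have "card (lpf_class k) \<le> card (?f ` lpf_class k)
          + card {(n, n') \<in> lpf_class k \<times> lpf_class k. n \<noteq> n' \<and> ?f n = ?f n'}"
    by (rule card_le_card_image_plus_collisions[OF finite_lpf_class])
  also have "card {(n, n') \<in> lpf_class k \<times> lpf_class k. n \<noteq> n' \<and> ?f n = ?f n'} \<le> collisions k v"
    unfolding collisions_def
  proof (rule card_mono)
    show "finite {(n, n') \<in> lpf_class k \<times> lpf_class k. n \<noteq> n' \<and> common_root k n n' v}"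
      by (rule finite_subset[of _ "lpf_class k \<times> lpf_class k"]) (auto simp: finite_lpf_class)
    show "{(n, n') \<in> lpf_class k \<times> lpf_class k. n \<noteq> n' \<and> ?f n = ?f n'}
        \<subseteq> {(n, n') \<in> lpf_class k \<times> lpf_class k. n \<noteq> n' \<and> common_root k n n' v}"
      using forced_value_solves[OF k] unfolding common_root_def by fastforce
  qed
  finally show ?thesis unfolding blocked_eq_image_forced_value[OF k] by simp
qed

lemma eq_if_multiplicities_congruent:
  assumes n: "n \<in> {1..q-1}" "n' \<in> {1..q-1}"
    and cong: "\<And>p. p \<in> P \<Longrightarrow> int q dvd int (multiplicity p n) - int (multiplicity p n')"
  shows "n = n'"
proof (rule multiplicity_eq_nat)
  fix p :: nat assume p: "prime p"
  show "multiplicity p n = multiplicity p n'"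
  proof (cases "p \<in> P")
    case True
    have "multiplicity p n < n" "multiplicity p n' < n'"
      using multiplicity_less_self[OF p] n by auto
    hence small: "\<bar>int (multiplicity p n) - int (multiplicity p n')\<bar> < int q" using n by auto
    have "int q dvd 1 * (int (multiplicity p n) - int (multiplicity p n'))"
      using cong[OF True] by simp
    moreover have "prime (int q)" "\<not> int q dvd 1" using prime_q by auto
    ultimately have "int (multiplicity p n) - int (multiplicity p n') = 0"
      using prime_dvd_mult_small_eq_0 small by blast
    thus ?thesis by simp
  next
    case False
    hence "\<not> p dvd n" "\<not> p dvd n'" using p n by (auto simp: primes_below_def dest: dvd_imp_le)
    thus ?thesis by (simp add: not_dvd_imp_multiplicity_0)
  qed
qed (use n in auto)

lemma Lform_eq_imp_dvd:
  assumes "Lform q n v = x0"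
  shows "int q dvd (\<Sum>p\<in>P. int (multiplicity p n) * int (v p)) - int x0"
proof -
  have "int (\<Sum>p\<in>P. multiplicity p n * v p) mod int q = int x0 mod int q"
    using assms x0(2) unfolding Lform_def by (metis mod_mod_trivial of_nat_mod)
  thus ?thesis by (simp add: mod_eq_dvd_iff)
qed

text \<open>The coefficients of \<open>\<mu>_k(n') L_n - \<mu>_k(n) L_{n'}\<close>, in which \<open>v_k\<close> cancels.\<close>

definition root_coeff :: "nat \<Rightarrow> nat \<Rightarrow> nat \<Rightarrow> nat \<Rightarrow> int" where
  "root_coeff k n n' r = int (multiplicity k n') * int (multiplicity r n)
                         - int (multiplicity k n) * int (multiplicity r n')"

lemma common_root_imp_congruence:
  assumes k: "k \<in> P" and root: "common_root k n n' v"
  shows "int q dvd (\<Sum>r\<in>P. root_coeff k n n' r * int (v r))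
                   - (int (multiplicity k n') - int (multiplicity k n)) * int x0"
proof -
  let ?e = "int (multiplicity k n)" and ?e' = "int (multiplicity k n')"
  obtain t where "Lform q n (v(k := t)) = x0" "Lform q n' (v(k := t)) = x0"
    using root unfolding common_root_def by blast
  note dvd = this[THEN Lform_eq_imp_dvd]
  have "int q dvd ?e' * ((\<Sum>p\<in>P. int (multiplicity p n) * int ((v(k := t)) p)) - int x0)
                     - ?e * ((\<Sum>p\<in>P. int (multiplicity p n') * int ((v(k := t)) p)) - int x0)"
    by (rule dvd_diff[OF dvd_mult[OF dvd(1)] dvd_mult[OF dvd(2)]])
  also have "?e' * ((\<Sum>p\<in>P. int (multiplicity p n) * int ((v(k := t)) p)) - int x0)
                - ?e * ((\<Sum>p\<in>P. int (multiplicity p n') * int ((v(k := t)) p)) - int x0)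
           = (\<Sum>r\<in>P. root_coeff k n n' r * int ((v(k := t)) r)) - (?e' - ?e) * int x0"
    by (simp add: root_coeff_def algebra_simps sum_subtractf sum_distrib_left)
  also have "(\<Sum>r\<in>P. root_coeff k n n' r * int ((v(k := t)) r)) = (\<Sum>r\<in>P. root_coeff k n n' r * int (v r))"
    by (intro sum.cong) (auto simp: root_coeff_def)
  finally show ?thesis .
qed

lemma common_root_imp_root_coeff_not_dvd:
  assumes k: "k \<in> P" and n: "n \<in> lpf_class k" "n' \<in> lpf_class k" "n \<noteq> n'"
    and root: "common_root k n n' v"
  shows "\<exists>p\<in>P. \<not> int q dvd root_coeff k n n' p"
proof (rule ccontr)
  let ?e = "multiplicity k n" and ?e' = "multiplicity k n'"
  assume "\<not> ?thesis"
  hence coeff: "int q dvd root_coeff k n n' p" if "p \<in> P" for p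
    using that by blast
  have "int q dvd (\<Sum>r\<in>P. root_coeff k n n' r * int (v r))"
    using coeff by (intro dvd_sum dvd_mult2) auto
  hence "int q dvd (\<Sum>r\<in>P. root_coeff k n n' r * int (v r))
            - ((\<Sum>r\<in>P. root_coeff k n n' r * int (v r)) - (int ?e' - int ?e) * int x0)"
    using common_root_imp_congruence[OF k root] by (rule dvd_diff)
  hence "int q dvd int x0 * (int ?e' - int ?e)" by (simp add: mult.commute)
  moreover have "\<not> int q dvd int x0" using x0 by (simp add: nat_dvd_not_less)
  moreover have "\<bar>int ?e' - int ?e\<bar> < int q"
    using multiplicity_lpf_class[OF n(1)] multiplicity_lpf_class[OF n(2)] by linarith
  moreover have "prime (int q)" using prime_q by simp
  ultimately have "int ?e' - int ?e = 0" using prime_dvd_mult_small_eq_0 by blast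
  hence e: "?e' = ?e" by simp
  have "int q dvd int (multiplicity p n) - int (multiplicity p n')" if "p \<in> P" for p
  proof -
    have "int q dvd int ?e * (int (multiplicity p n) - int (multiplicity p n'))"
      using coeff[OF that] e by (simp add: root_coeff_def right_diff_distrib)
    moreover have "\<not> int q dvd int ?e"
      using multiplicity_lpf_class[OF n(1)] by (simp add: nat_dvd_not_less)
    ultimately show ?thesis using prime_q by (simp add: prime_dvd_mult_iff)
  qed
  hence "n = n'"
    by (rule eq_if_multiplicities_congruent[OF subsetD[OF lpf_class_subset n(1)]
                                               subsetD[OF lpf_class_subset n(2)]])
  thus False using n(3) by contradiction
qed

lemma card_common_root_le:
  assumes k: "k \<in> P" and n: "n \<in> lpf_class k" "n' \<in> lpf_class k" "n \<noteq> n'"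
  shows "card {v \<in> V. common_root k n n' v} * q \<le> card V"
proof (cases "\<exists>v. common_root k n n' v")
  case True
  then obtain p where p: "p \<in> P" "\<not> int q dvd root_coeff k n n' p"
    using common_root_imp_root_coeff_not_dvd[OF k n] by blast
  let ?d = "- ((int (multiplicity k n') - int (multiplicity k n)) * int x0)"
  have "{v \<in> V. common_root k n n' v}
          \<subseteq> {v \<in> V. int q dvd (\<Sum>r\<in>P. root_coeff k n n' r * int (v r)) + ?d}"
    using common_root_imp_congruence[OF k] by auto
  hence "card {v \<in> V. common_root k n n' v} * q
          \<le> card {v \<in> V. int q dvd (\<Sum>r\<in>P. root_coeff k n n' r * int (v r)) + ?d} * q"
    using finite_V by (intro mult_le_mono1 card_mono) auto
  also have "\<dots> \<le> card V"
    unfolding V_def by (rule card_linear_congruence_le[where c = "root_coeff k n n'", OF prime_q finite_P p])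
  finally show ?thesis .
qed simp

lemma sum_collisions_le:
  assumes k: "k \<in> P"
  shows "(\<Sum>v\<in>V. collisions k v) * q \<le> card (lpf_class k) ^ 2 * card V"
proof -
  let ?X = "{x \<in> lpf_class k \<times> lpf_class k. fst x \<noteq> snd x}"
  let ?root = "\<lambda>x v. common_root k (fst x) (snd x) v"
  have finX: "finite ?X" using finite_lpf_class by auto
  have "(\<Sum>v\<in>V. collisions k v) = (\<Sum>v\<in>V. card {x \<in> ?X. ?root x v})"
    unfolding collisions_def by (intro sum.cong refl arg_cong[where f = card]) auto
  also have "\<dots> = (\<Sum>x\<in>?X. card {v \<in> V. ?root x v})"
    using sum.swap_restrict[OF finite_V finX, of "\<lambda>_ _. 1::nat" "\<lambda>v x. ?root x v"] by simp
  finally have "(\<Sum>v\<in>V. collisions k v) * q = (\<Sum>x\<in>?X. card {v \<in> V. ?root x v} * q)"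
    by (simp add: sum_distrib_right)
  also have "\<dots> \<le> (\<Sum>x\<in>?X. card V)"
    using card_common_root_le[OF k] by (intro sum_mono) auto
  also have "\<dots> = card ?X * card V" by simp
  also have "\<dots> \<le> card (lpf_class k \<times> lpf_class k) * card V"
    using finite_lpf_class by (intro mult_le_mono1 card_mono) auto
  finally show ?thesis by (simp add: card_cartesian_product power2_eq_square)
qed

lemma sum_if_avoids_below:
  "(\<Sum>v\<in>V. if avoids_below k v then c else 0) = c * survivors k"
  using finite_V by (simp add: sum.If_cases Int_def conj_commute)

lemma survivors_Suc_ge:
  assumes k: "k \<in> P"
  shows "(q - card (lpf_class k)) * survivors k \<le> survivors (Suc k) * q"
  unfolding survivors_Suc[OF k] sum_if_avoids_below[symmetric]
proof (intro sum_mono)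
  fix v show "(if avoids_below k v then q - card (lpf_class k) else 0)
      \<le> (if avoids_below k v then q - card (blocked k v) else 0)"
    using card_blocked_le[OF k, of v] by auto
qed

lemma survivors_Suc_le:
  assumes k: "k \<in> P"
  shows "survivors (Suc k) * q \<le> (q - card (lpf_class k)) * survivors k + (\<Sum>v\<in>V. collisions k v)"
proof -
  have "survivors (Suc k) * q \<le> (\<Sum>v\<in>V. (if avoids_below k v then q - card (lpf_class k) else 0)
                                             + collisions k v)"
    unfolding survivors_Suc[OF k]
  proof (intro sum_mono)
    fix v show "(if avoids_below k v then q - card (blocked k v) else 0)
        \<le> (if avoids_below k v then q - card (lpf_class k) else 0) + collisions k v"
      using card_lpf_class_le_blocked_plus_collisions[OF k, of v] card_lpf_class_less[of k] by auto
  qed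
  thus ?thesis by (simp add: sum.distrib sum_if_avoids_below)
qed

definition density :: "nat \<Rightarrow> real" where
  "density k = survivors k / card V"

definition weight :: "nat \<Rightarrow> real" where
  "weight k = (if prime k then card (lpf_class k) / q else 0)"

lemma weight_nonneg: "0 \<le> weight k"
  unfolding weight_def by auto

lemma weight_le_1: "weight k \<le> 1"
  unfolding weight_def using card_lpf_class_less[of k] by auto

lemma density_Suc_ge:
  assumes k: "k \<in> P"
  shows "(1 - weight k) * density k \<le> density (Suc k)"
proof -
  have "prime k" using k by (simp add: primes_below_def)
  have "real ((q - card (lpf_class k)) * survivors k) \<le> real (survivors (Suc k) * q)"
    using survivors_Suc_ge[OF k] by (simp only: of_nat_le_iff)
  hence "(real q - card (lpf_class k)) * survivors k / (q * card V) \<le> survivors (Suc k) * q / (q * card V)"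
    using card_lpf_class_less[of k] by (intro divide_right_mono) (auto simp: of_nat_diff)
  thus ?thesis unfolding density_def weight_def using \<open>prime k\<close> q_pos card_V_pos
    by (simp add: field_simps)
qed

lemma density_Suc_le:
  assumes k: "k \<in> P"
  shows "density (Suc k) \<le> (1 - weight k) * density k + weight k ^ 2"
proof -
  have "prime k" using k by (simp add: primes_below_def)
  let ?N = "card (lpf_class k)"
  have "survivors (Suc k) * q * q \<le> (q - ?N) * survivors k * q + (\<Sum>v\<in>V. collisions k v) * q"
    using mult_le_mono1[OF survivors_Suc_le[OF k], of q] by (simp add: add_mult_distrib)
  also have "\<dots> \<le> (q - ?N) * survivors k * q + ?N ^ 2 * card V"
    using sum_collisions_le[OF k] by simp
  finally have "real (survivors (Suc k) * q * q) \<le> real ((q - ?N) * survivors k * q + ?N ^ 2 * card V)"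
    by (simp only: of_nat_le_iff)
  hence "survivors (Suc k) * q * q / (q * q * card V)
           \<le> ((real q - ?N) * survivors k * q + ?N ^ 2 * card V) / (q * q * card V)"
    using card_lpf_class_less[of k] by (intro divide_right_mono) (auto simp: of_nat_diff)
  thus ?thesis unfolding density_def weight_def using \<open>prime k\<close> q_pos card_V_pos
    by (simp add: field_simps power2_eq_square)
qed

lemma density_Suc_nonprime: "\<not> prime k \<Longrightarrow> density (Suc k) = density k"
  unfolding density_def by (simp add: avoids_below_Suc_nonprime)

lemma density_2: "density 2 = 1"
proof -
  have "avoids_below 2 v" for v
    unfolding avoids_below_def
  proof (intro ballI impI)
    fix n :: nat assume n: "n \<in> {1..q-1}" "\<forall>p\<in>prime_factors n. p < 2"
    have "prime_factors n = {}"
    proof (rule ccontr)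
      assume "prime_factors n \<noteq> {}"
      then obtain p where p: "p \<in> prime_factors n" by blast
      hence "p < 2" using n(2) by blast
      moreover have "prime p" using p by (simp add: in_prime_factors_iff)
      ultimately show False using prime_ge_2_nat[of p] by linarith
    qed
    hence "n = 1" using n(1) prime_factorization_empty_iff[of n] by auto
    thus "Lform q n v \<noteq> x0" using x0 unfolding Lform_def by simp
  qed
  thus ?thesis unfolding density_def using card_V_pos by simp
qed

lemma density_q: "density q = cq q x0"
proof -
  have "\<forall>p\<in>prime_factors n. p < q" if "n \<in> {1..q-1}" for n
    using that by (auto simp: in_prime_factors_iff dest!: dvd_imp_le)
  hence "{v \<in> V. avoids_below q v} = {v \<in> P \<rightarrow>\<^sub>E {0..<q}. \<forall>n\<in>{1..q-1}. Lform q n v \<noteq> x0}"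
    unfolding avoids_below_def V_def by blast
  thus ?thesis unfolding density_def cq_def Nq_def card_V by simp
qed

lemma density_bounds:
  assumes "2 \<le> k" "k \<le> q"
  shows "(\<Prod>j\<in>{2..<k}. 1 - weight j) \<le> density k \<and>
         density k \<le> (\<Prod>j\<in>{2..<k}. 1 - weight j) + (\<Sum>j\<in>{2..<k}. weight j ^ 2)"
  using assms
proof (induction k rule: nat_induct_at_least)
  case base
  thus ?case using density_2 by simp
next
  case (Suc k)
  let ?\<Pi> = "\<Prod>j\<in>{2..<k}. 1 - weight j" and ?\<Sigma> = "\<Sum>j\<in>{2..<k}. weight j ^ 2"
  have IH: "?\<Pi> \<le> density k" "density k \<le> ?\<Pi> + ?\<Sigma>" using Suc by auto
  have \<Pi>: "(\<Prod>j\<in>{2..<Suc k}. 1 - weight j) = ?\<Pi> * (1 - weight k)"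
    using Suc(1) by (simp add: prod.atLeastLessThan_Suc)
  have \<Sigma>: "(\<Sum>j\<in>{2..<Suc k}. weight j ^ 2) = ?\<Sigma> + weight k ^ 2"
    using Suc(1) by (simp add: sum.atLeastLessThan_Suc)
  have w: "0 \<le> weight k" "weight k \<le> 1" by (rule weight_nonneg, rule weight_le_1)
  have "0 \<le> ?\<Sigma>" by (intro sum_nonneg) auto
  show ?case
  proof (cases "prime k")
    case True
    hence k: "k \<in> P" using Suc(3) by (simp add: primes_below_def)
    have "?\<Pi> * (1 - weight k) \<le> density k * (1 - weight k)"
      using IH(1) w by (intro mult_right_mono) auto
    also have "\<dots> \<le> density (Suc k)" using density_Suc_ge[OF k] by (simp add: mult.commute)
    finally have lower: "?\<Pi> * (1 - weight k) \<le> density (Suc k)" .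
    have "density (Suc k) \<le> (1 - weight k) * density k + weight k ^ 2" by (rule density_Suc_le[OF k])
    also have "\<dots> \<le> (1 - weight k) * (?\<Pi> + ?\<Sigma>) + weight k ^ 2"
      using IH(2) w by (intro add_right_mono mult_left_mono) auto
    also have "\<dots> \<le> ?\<Pi> * (1 - weight k) + ?\<Sigma> + weight k ^ 2"
      using w \<open>0 \<le> ?\<Sigma>\<close> by (simp add: algebra_simps)
    finally show ?thesis using lower \<Pi> \<Sigma> by simp
  next
    case False
    hence "weight k = 0" unfolding weight_def by simp
    thus ?thesis using IH \<Pi> \<Sigma> density_Suc_nonprime[OF False] by simp
  qed
qed

lemma card_lpf_class_le_div:
  assumes j: "prime j"
  shows "card (lpf_class j) \<le> (q - 1) div j"
proof -
  have "lpf_class j \<subseteq> (\<lambda>i. j * i) ` {1..(q - 1) div j}"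
  proof
    fix n assume "n \<in> lpf_class j"
    hence n: "1 \<le> n" "n \<le> q - 1" "j dvd n" unfolding lpf_class_def by (auto simp: in_prime_factors_iff)
    then obtain i where i: "n = j * i" by blast
    hence "1 \<le> i" using n(1) by (cases i) auto
    moreover have "i \<le> (q - 1) div j"
      using div_le_mono[OF n(2), of j] i prime_gt_0_nat[OF j] by simp
    ultimately show "n \<in> (\<lambda>i. j * i) ` {1..(q - 1) div j}" using i by auto
  qed
  hence "card (lpf_class j) \<le> card ((\<lambda>i. j * i) ` {1..(q - 1) div j})" by (intro card_mono) auto
  also have "\<dots> \<le> (q - 1) div j" using card_image_le[of "{1..(q - 1) div j}" "\<lambda>i. j * i"] by simp
  finally show ?thesis .
qed

lemma weight_le_inverse:
  assumes j: "prime j"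
  shows "weight j \<le> 1 / j"
proof -
  have "real (card (lpf_class j)) \<le> real ((q - 1) div j)"
    using card_lpf_class_le_div[OF j] by (simp only: of_nat_le_iff)
  also have "\<dots> \<le> real (q - 1) / j" by (rule of_nat_div_le_of_nat)
  also have "\<dots> \<le> real q / j" by (intro divide_right_mono) auto
  finally show ?thesis unfolding weight_def using j q_pos by (simp add: field_simps)
qed

lemma weight_le_half: "weight j \<le> 1 / 2"
proof (cases "prime j")
  case True
  have "weight j \<le> 1 / j" by (rule weight_le_inverse[OF True])
  also have "\<dots> \<le> 1 / 2" using prime_ge_2_nat[OF True] by (simp add: field_simps)
  finally show ?thesis .
qed (simp add: weight_def)

lemma sum_weight: "(\<Sum>j\<in>{2..<q}. weight j) = 1 - 2 / q"
proof -
  let ?J = "{j \<in> {2..<q}. prime j}"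
  have disjoint: "lpf_class i \<inter> lpf_class j = {}" if "i \<noteq> j" for i j
    using that unfolding lpf_class_def by (auto intro: antisym)
  have cover: "(\<Union>j\<in>?J. lpf_class j) = {2..q - 1}"
  proof (intro equalityI subsetI)
    fix n assume "n \<in> (\<Union>j\<in>?J. lpf_class j)"
    then obtain j where "n \<in> lpf_class j" by blast
    thus "n \<in> {2..q - 1}" unfolding lpf_class_def by (cases "n = 1") auto
  next
    fix n assume n: "n \<in> {2..q - 1}"
    then obtain p where "prime p" "p dvd n" using prime_factor_nat[of n] by auto
    hence "p \<in> prime_factors n" using n by (simp add: in_prime_factors_iff)
    hence ne: "prime_factors n \<noteq> {}" by blast
    let ?j = "Max (prime_factors n)"
    have j: "?j \<in> prime_factors n" using ne by (intro Max_in) auto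
    hence "prime ?j" "?j \<le> n" using n by (auto simp: in_prime_factors_iff dvd_imp_le)
    hence "?j \<in> ?J" using n prime_ge_2_nat[of ?j] by auto
    moreover have "n \<in> lpf_class ?j" unfolding lpf_class_def using n j by auto
    ultimately show "n \<in> (\<Union>j\<in>?J. lpf_class j)" by blast
  qed
  have "(\<Sum>j\<in>{2..<q}. weight j) = (\<Sum>j\<in>?J. real (card (lpf_class j))) / q"
    unfolding weight_def by (simp add: sum.inter_filter[symmetric] sum_divide_distrib)
  also have "(\<Sum>j\<in>?J. real (card (lpf_class j))) = real (card (\<Union>j\<in>?J. lpf_class j))"
    using disjoint finite_lpf_class by (simp add: card_UN_disjoint)
  also have "\<dots> = real q - 2" unfolding cover using prime_ge_2_nat[OF prime_q] by (simp add: of_nat_diff)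
  finally show ?thesis using q_pos by (simp add: field_simps)
qed

lemma weight_mult_q_le_smooth:
  assumes j: "prime j" "j < y"
  shows "weight j * q \<le> (log 2 q + 1) ^ y"
proof -
  have q2: "2 \<le> q" using prime_ge_2_nat[OF prime_q] .
  have "lpf_class j \<subseteq> {n \<in> {1..q - 1}. \<forall>p\<in>prime_factors n. p < y}"
    unfolding lpf_class_def using j by auto
  hence "real (card (lpf_class j)) \<le> card {n \<in> {1..q - 1}. \<forall>p\<in>prime_factors n. p < y}"
    by (simp add: card_mono)
  also have "\<dots> \<le> (log 2 (q - 1) + 1) ^ y"
    using card_smooth_le[of "q - 1" y] q2 by (simp add: of_nat_diff)
  also have "\<dots> \<le> (log 2 q + 1) ^ y"
    using q2 by (intro power_mono) auto
  finally show ?thesis unfolding weight_def using j q_pos by simp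
qed

lemma weight_le:
  assumes Y: "2 \<le> Y" and growth: "(log 2 q + 1) powr (Y + 1) \<le> q / Y"
  shows "weight j \<le> 1 / Y"
proof (cases "prime j")
  case False
  thus ?thesis unfolding weight_def using Y by simp
next
  case True
  show ?thesis
  proof (cases "Y \<le> j")
    case True
    have "weight j \<le> 1 / j" by (rule weight_le_inverse[OF \<open>prime j\<close>])
    also have "\<dots> \<le> 1 / Y" using True Y by (intro divide_left_mono) auto
    finally show ?thesis .
  next
    case False
    define y where "y = nat \<lceil>Y\<rceil>"
    have "j < y" "real y \<le> Y + 1" using False Y unfolding y_def by linarith+
    have log: "1 \<le> log 2 q + 1" using q_pos by simp
    have "weight j * q \<le> (log 2 q + 1) ^ y" by (rule weight_mult_q_le_smooth[OF \<open>prime j\<close> \<open>j < y\<close>])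
    also have "\<dots> = (log 2 q + 1) powr real y" using log by (simp add: powr_realpow)
    also have "\<dots> \<le> (log 2 q + 1) powr (Y + 1)" using log \<open>real y \<le> Y + 1\<close> by (intro powr_mono)
    also have "\<dots> \<le> q / Y" by (rule growth)
    finally show ?thesis using q_pos Y by (simp add: field_simps)
  qed
qed

lemma cq_near_exp_neg_1:
  assumes m: "\<And>j. weight j \<le> m" and q4: "4 \<le> q"
  shows "\<bar>cq q x0 - exp (-1)\<bar> \<le> 2 * m + 4 / q"
proof -
  let ?\<Pi> = "\<Prod>j\<in>{2..<q}. 1 - weight j" and ?\<Sigma> = "\<Sum>j\<in>{2..<q}. weight j ^ 2"
  have J: "\<And>j. j \<in> {2..<q} \<Longrightarrow> 0 \<le> weight j \<and> weight j \<le> 1/2 \<and> weight j \<le> m"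
    using weight_nonneg weight_le_half m by blast
  have "0 \<le> m" using weight_nonneg[of 0] m[of 0] by linarith
  have \<delta>: "0 \<le> 2 / real q" "2 / real q \<le> 1/2" using q4 by (auto simp: field_simps)
  have near: "exp (-1) - 2 * m \<le> ?\<Pi>" "?\<Pi> + ?\<Sigma> \<le> exp (-1) + 2 * (2 / q) + m"
    using prod_one_minus_near_exp_neg_1[of "{2..<q}" weight m "2 / real q"] J \<open>0 \<le> m\<close> sum_weight \<delta>
    by auto
  have "?\<Pi> \<le> cq q x0" "cq q x0 \<le> ?\<Pi> + ?\<Sigma>"
    using density_bounds[of q] q4 by (auto simp: density_q)
  moreover have "2 * (2 / real q) = 4 / q" by simp
  ultimately show ?thesis unfolding abs_le_iff using near \<delta> \<open>0 \<le> m\<close> by (intro conjI; linarith)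
qed

end

section \<open>Asymptotics\<close>

lemma plog2_eq_ln_ln:
  fixes x :: real
  assumes "1 < x" "2 \<le> ln (ln x)"
  shows "plog2 x = ln (ln x)"
proof -
  have "0 < ln x" using assms(1) by simp
  hence "exp 2 \<le> ln x" using assms(2) by (metis exp_le_cancel_iff exp_ln)
  moreover have "2 \<le> exp (2::real)" using exp_ge_add_one_self[of 2] by simp
  ultimately have "plog x = ln x" unfolding plog_def by simp
  thus ?thesis unfolding plog2_def plog_def using assms(2) by simp
qed

lemma eventually_large_q:
  "eventually (\<lambda>x::real. (log 2 x + 1) powr (ln (ln x) + 1) \<le> x / ln (ln x) \<and>
     4 / x \<le> 1 / ln (ln x) \<and> 2 \<le> ln (ln x) \<and> 4 \<le> x) at_top"
proof -
  have "eventually (\<lambda>x::real. (log 2 x + 1) powr (ln (ln x) + 1) \<le> x / ln (ln x)) at_top"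
    by real_asymp
  moreover have "eventually (\<lambda>x::real. 4 / x \<le> 1 / ln (ln x)) at_top" by real_asymp
  moreover have "eventually (\<lambda>x::real. 2 \<le> ln (ln x)) at_top" by real_asymp
  moreover have "eventually (\<lambda>x::real. 4 \<le> x) at_top" by real_asymp
  ultimately show ?thesis by eventually_elim auto
qed

theorem theorem1p1:
  shows "\<exists>C Q. \<forall>q x0. prime q \<and> q \<ge> Q \<and> x0 \<in> {1..<q} \<longrightarrow>
           \<bar>cq q x0 - exp (-1)\<bar> \<le> C / plog2 (real q)"
proof -
  obtain X where X: "\<And>x. X \<le> x \<Longrightarrow> (log 2 x + 1) powr (ln (ln x) + 1) \<le> x / ln (ln x) \<and>
      4 / x \<le> 1 / ln (ln x) \<and> 2 \<le> ln (ln x) \<and> 4 \<le> x"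
    using eventually_large_q unfolding eventually_at_top_linorder by blast
  show ?thesis
  proof (intro exI allI impI)
    fix q x0 :: nat
    assume q: "prime q \<and> nat \<lceil>X\<rceil> \<le> q \<and> x0 \<in> {1..<q}"
    then interpret residue_sieve q x0 by unfold_locales auto
    let ?Y = "ln (ln (real q))"
    have large: "(log 2 q + 1) powr (?Y + 1) \<le> q / ?Y" "4 / q \<le> 1 / ?Y" "2 \<le> ?Y" "4 \<le> q"
      using X[of q] q by linarith+
    have "\<bar>cq q x0 - exp (-1)\<bar> \<le> 2 * (1 / ?Y) + 4 / q"
      using large by (intro cq_near_exp_neg_1 weight_le) auto
    also have "\<dots> \<le> 3 / plog2 q" using large by (simp add: plog2_eq_ln_ln)
    finally show "\<bar>cq q x0 - exp (-1)\<bar> \<le> 3 / plog2 q" .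
  qed
qed

end
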